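(* Let $f\in\mathbb{Q}[x]$ be a convex univariate polynomial of degree $4$. If the minimum value of $f$ over $\mathbb{R}$ is rational, then the minimizer of $f$ is rational. *)

theory Defs
  imports "HOL-Analysis.Analysis" "HOL-Computational_Algebra.Polynomial"
begin

end

theory Submission
  imports Defs "HOL-Computational_Algebra.Polynomial_Factorial" "HOL-Computational_Algebra.Field_as_Ring"
begin

(* Let m be the minimum value and g = f - m, a rational polynomial. The minimizers of a convex
   function form a convex set, and here they are roots of g, so by finiteness the minimizer x0 is
   the only real root of g; it is a multiple root, hence a root of h = gcd(g, g') in Q[x].
   Writing g = h k with deg h, deg k >= 1 and deg h + deg k <= 4, either h or k is a linear
   rational factor of g, whose rational root must be x0, or h is a quadratic whose only real
   root is x0, which is then the double root -b/(2a). *)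

lemma map_poly_of_rat_add:
  "map_poly (of_rat :: rat \<Rightarrow> 'a::field_char_0) (p + q) = map_poly of_rat p + map_poly of_rat q"
  by (rule poly_eqI) (simp add: coeff_map_poly of_rat_add)

lemma map_poly_of_rat_diff:
  "map_poly (of_rat :: rat \<Rightarrow> 'a::field_char_0) (p - q) = map_poly of_rat p - map_poly of_rat q"
  by (rule poly_eqI) (simp add: coeff_map_poly of_rat_diff)

lemma map_poly_of_rat_mult:
  "map_poly (of_rat :: rat \<Rightarrow> 'a::field_char_0) (p * q) = map_poly of_rat p * map_poly of_rat q"
  by (rule poly_eqI) (simp add: coeff_map_poly coeff_mult of_rat_sum of_rat_mult)

lemma map_poly_of_rat_pderiv:
  "map_poly (of_rat :: rat \<Rightarrow> 'a::field_char_0) (pderiv p) = pderiv (map_poly of_rat p)"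
  by (rule poly_eqI) (simp add: coeff_map_poly coeff_pderiv of_rat_mult of_rat_add)

lemma poly_map_poly_of_rat:
  "poly (map_poly (of_rat :: rat \<Rightarrow> 'a::field_char_0) p) (of_rat x) = of_rat (poly p x)"
  by (simp add: poly_altdef coeff_map_poly degree_map_poly of_rat_sum of_rat_mult of_rat_power)

lemma poly_map_poly_of_rat_gcd_eq_0:
  fixes p q :: "rat poly" and x :: "'a::field_char_0"
  assumes "poly (map_poly of_rat p) x = 0" "poly (map_poly of_rat q) x = 0"
  shows "poly (map_poly of_rat (gcd p q)) x = 0"
proof -
  obtain a b where "a * p + b * q = gcd p q"
    using bezout_coefficients_fst_snd by blast
  then have "map_poly of_rat (gcd p q) =
      map_poly of_rat a * map_poly of_rat p + map_poly (of_rat :: rat \<Rightarrow> 'a) b * map_poly of_rat q"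
    by (metis map_poly_of_rat_add map_poly_of_rat_mult)
  then show ?thesis
    using assms by simp
qed

lemma convex_on_imp_convex_minimizers:
  assumes "convex_on S f"
  shows "convex {x\<in>S. \<forall>z\<in>S. f x \<le> f z}" (is "convex ?M")
  unfolding convex_alt
proof (intro ballI allI impI)
  fix x y and t :: real
  assume x: "x \<in> ?M" and y: "y \<in> ?M" and t: "0 \<le> t \<and> t \<le> 1"
  have in_S: "(1 - t) *\<^sub>R x + t *\<^sub>R y \<in> S"
    using x y t convex_on_imp_convex[OF assms] by (simp add: convex_alt)
  have "f ((1 - t) *\<^sub>R x + t *\<^sub>R y) \<le> (1 - t) * f x + t * f y"
    using x y t by (intro convex_onD[OF assms]) auto
  also have "\<dots> = f x"
    using x y by (simp add: order_antisym algebra_simps)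
  finally show "(1 - t) *\<^sub>R x + t *\<^sub>R y \<in> ?M"
    using x in_S by force
qed

lemma convex_poly_unique_minimizer:
  fixes p :: "real poly"
  assumes "degree p \<noteq> 0" "convex_on UNIV (poly p)"
    and "\<forall>z. poly p x \<le> poly p z" "poly p y = poly p x"
  shows "y = x"
proof (rule ccontr)
  assume "y \<noteq> x"
  let ?M = "{x\<in>UNIV. \<forall>z\<in>UNIV. poly p x \<le> poly p z}"
  have "closed_segment x y \<subseteq> ?M"
    using assms(3,4) convex_on_imp_convex_minimizers[OF assms(2)] by (simp add: convex_contains_segment)
  also have "?M \<subseteq> {z. poly (p - [:poly p x:]) z = 0}"
    using assms(3) by (auto intro: order_antisym)
  finally have "infinite {z. poly (p - [:poly p x:]) z = 0}"
    using \<open>y \<noteq> x\<close> finite_subset finite_closed_segment by metis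
  moreover have "p - [:poly p x:] \<noteq> 0"
    using assms(1) by (metis degree_pCons_0 eq_iff_diff_eq_0)
  ultimately show False
    using poly_roots_finite by blast
qed

lemma poly_pderiv_eq_0_at_minimizer:
  fixes p :: "real poly"
  assumes "\<forall>z. poly p x \<le> poly p z"
  shows "poly (pderiv p) x = 0"
  using assms by (intro DERIV_local_min[OF poly_DERIV, where d = 1]) auto

lemma poly_degree_1_root:
  fixes p :: "'a::field poly"
  assumes "degree p = 1"
  shows "poly p (- coeff p 0 / coeff p 1) = 0"
proof -
  have "coeff p 1 \<noteq> 0"
    using assms by (metis degree_0 leading_coeff_0_iff zero_neq_one)
  then show ?thesis
    using assms by (simp add: poly_altdef)
qed

lemma unique_real_root_in_Rats_if_linear_factor:
  fixes g k :: "rat poly" and x :: real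
  assumes "k dvd g" "degree k = 1"
    and "\<forall>y. poly (map_poly of_rat g) y = 0 \<longrightarrow> y = x"
  shows "x \<in> \<rat>"
proof -
  define r where "r = - coeff k 0 / coeff k 1"
  have "poly g r = 0"
    using assms(1) poly_degree_1_root[OF assms(2)] by (auto simp: r_def elim!: dvdE)
  then have "poly (map_poly of_rat g) (of_rat r :: real) = 0"
    by (simp add: poly_map_poly_of_rat)
  with assms(3) have "x = of_rat r"
    by blast
  then show ?thesis
    by simp
qed

lemma unique_real_root_of_quadratic_in_Rats:
  fixes h :: "rat poly" and x :: real
  assumes "degree h = 2" "poly (map_poly of_rat h) x = 0"
    and "\<forall>y. poly (map_poly of_rat h) y = 0 \<longrightarrow> y = x"
  shows "x \<in> \<rat>"
proof -
  define a b c where "a = coeff h 2" and "b = coeff h 1" and "c = coeff h 0"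
  have "a \<noteq> 0"
    using assms(1) by (metis a_def degree_0 leading_coeff_0_iff zero_neq_numeral)
  have eval: "poly (map_poly of_rat h) y = of_rat a * y\<^sup>2 + of_rat b * y + of_rat c" for y :: real
    using assms(1) by (simp add: poly_altdef coeff_map_poly degree_map_poly a_def b_def c_def
        numeral_2_eq_2 atMost_Suc algebra_simps)
  \<comment> \<open>By Vieta, the second root is \<open>-b/a - x\<close>; as it is real, it equals \<open>x\<close>.\<close>
  have "poly (map_poly of_rat h) (- of_rat b / of_rat a - x) = 0"
    using assms(2) \<open>a \<noteq> 0\<close> by (simp add: eval field_simps power2_eq_square)
  with assms(3) have "- of_rat b / of_rat a - x = x"
    by blast
  then have "x = - of_rat b / (2 * of_rat a)"
    using \<open>a \<noteq> 0\<close> by (simp add: field_simps)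
  also have "\<dots> = of_rat (- b / (2 * a))"
    by (simp add: of_rat_divide of_rat_mult of_rat_minus)
  finally show ?thesis
    by simp
qed

lemma unique_multiple_real_root_in_Rats:
  fixes g :: "rat poly" and x :: real
  assumes "g \<noteq> 0" "degree g \<le> 4"
    and "poly (map_poly of_rat g) x = 0" "poly (pderiv (map_poly of_rat g)) x = 0"
    and "\<forall>y. poly (map_poly of_rat g) y = 0 \<longrightarrow> y = x"
  shows "x \<in> \<rat>"
proof -
  define h where "h = gcd g (pderiv g)"
  define k where "k = g div h"
  have g_eq: "g = h * k"
    by (simp add: h_def k_def)
  have h_root: "poly (map_poly of_rat h) x = 0"
    using assms(3,4) unfolding h_def by (intro poly_map_poly_of_rat_gcd_eq_0) (simp_all add: map_poly_of_rat_pderiv)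
  have h_roots: "\<forall>y. poly (map_poly of_rat h) y = 0 \<longrightarrow> y = x"
    using assms(5) by (simp add: g_eq map_poly_of_rat_mult)
  have "h \<noteq> 0" "k \<noteq> 0"
    using assms(1) g_eq by auto
  have "degree h \<noteq> 0"
  proof
    assume "degree h = 0"
    then obtain c where "h = [:c:]"
      by (elim degree_eq_zeroE)
    with h_root \<open>h \<noteq> 0\<close> show False
      by (simp add: map_poly_pCons)
  qed
  have deg_g: "degree g = degree h + degree k"
    using \<open>h \<noteq> 0\<close> \<open>k \<noteq> 0\<close> by (simp add: g_eq degree_mult_eq)
  then have "degree h \<le> degree g - 1"
    using \<open>degree h \<noteq> 0\<close> dvd_imp_degree_le[of h "pderiv g"]
    by (simp add: h_def degree_pderiv pderiv_eq_0_iff)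
  with deg_g consider "degree h = 1" | "degree h = 2" | "degree k = 1"
    using \<open>degree h \<noteq> 0\<close> assms(2) by linarith
  then show ?thesis
  proof cases
    case 1
    then show ?thesis
      using assms(5) g_eq by (intro unique_real_root_in_Rats_if_linear_factor[of h g]) simp_all
  next
    case 2
    then show ?thesis
      using h_root h_roots by (rule unique_real_root_of_quadratic_in_Rats)
  next
    case 3
    then show ?thesis
      using assms(5) g_eq by (intro unique_real_root_in_Rats_if_linear_factor[of k g]) simp_all
  qed
qed

theorem lemmaC3:
  fixes f :: "rat poly"
  assumes "degree f = 4"
    and "convex_on UNIV (\<lambda>x::real. poly (map_poly of_rat f) x)"
    and "(INF x::real. poly (map_poly of_rat f) x) \<in> \<rat>"
  shows "\<forall>x::real. (\<forall>y. poly (map_poly of_rat f) x \<le> poly (map_poly of_rat f) y) \<longrightarrow> x \<in> \<rat>"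
proof (intro allI impI)
  fix x :: real
  let ?F = "map_poly of_rat f :: real poly"
  assume x_min: "\<forall>y. poly ?F x \<le> poly ?F y"
  have "(INF y. poly ?F y) = poly ?F x"
    using x_min by (intro cInf_eq_minimum) auto
  with assms(3) obtain m where m: "poly ?F x = of_rat m"
    by (auto elim: Rats_cases)
  define g where "g = f - [:m:]"
  have g_F: "map_poly of_rat g = ?F - [:poly ?F x:]"
    by (simp add: g_def m map_poly_of_rat_diff map_poly_pCons)
  have "g \<noteq> 0"
    using assms(1) by (auto simp: g_def)
  moreover have "degree g \<le> 4"
    unfolding g_def using assms(1) by (intro degree_diff_le) simp_all
  moreover have "poly (map_poly of_rat g) x = 0"
    by (simp add: g_F)
  moreover have "poly (pderiv (map_poly of_rat g)) x = 0"
    using poly_pderiv_eq_0_at_minimizer[OF x_min] by (simp add: g_F pderiv_diff)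
  moreover have "\<forall>y. poly (map_poly of_rat g) y = 0 \<longrightarrow> y = x"
    using convex_poly_unique_minimizer[OF _ assms(2) x_min] assms(1)
    by (simp add: g_F degree_map_poly)
  ultimately show "x \<in> \<rat>"
    by (rule unique_multiple_real_root_in_Rats)
qed

end
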